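(* Let $n\in\mathbb{Z}$ and let $d:\mathcal{A}\to A$ be an $n$-covariant derivation. Then there exists a function $\beta:\mathbb{Z}\to\mathbb{C}$ with convergent increments, unique if $n\ne0$ and unique modulo an additive constant if $n=0$, such that $d(a)=[U^n\beta(\mathbb{K}),a]$ for all $a\in\mathcal{A}$.
   Context: Let $\{E_k\}$ be the canonical basis of $\ell^2(\mathbb{Z})$, $UE_k=E_{k+1}$, $\mathbb{K}E_k=kE_k$, $a(\mathbb{K})E_k=a(k)E_k$. $A$ is the C$^*$-algebra generated by $U$ and all $a(\mathbb{K})$ with $a$ having finite limits at $\pm\infty$; $\mathcal{A}$ is the algebra of finite sums $\sum_nU^na_n(\mathbb{K})$ with each $a_n$ eventually constant (constant on $k\ge k_0$ and on $k\le-k_0$ for some $k_0$). For $\varphi\in[0,2\pi)$ the rotation automorphism is $\rho_\varphi(a)=e^{i\varphi\mathbb{K}}ae^{-i\varphi\mathbb{K}}$ (it preserves $A$ and $\mathcal{A}$ and fixes diagonal operators). A derivation $d:\mathcal{A}\to A$ (linear, Leibniz) is $n$-covariant if $d(\rho_\varphi(a))=e^{-in\varphi}\rho_\varphi(d(a))$ for all $a\in\mathcal{A}$, $\varphi$. A function $\beta$ has convergent increments if $k\mapsto\beta(k)-\beta(k-1)$ has finite limits as $k\to\pm\infty$. *)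

theory Defs
  imports "HOL-Analysis.Analysis"
begin

text \<open>Operators on l2(Z) are represented by their matrices with respect to the
canonical basis E_k:  M i j = <E_i, M E_j>.\<close>

type_synonym mat = "int \<Rightarrow> int \<Rightarrow> complex"

definition l2 :: "(int \<Rightarrow> complex) set" where
  "l2 = {x. (\<lambda>k. (cmod (x k))^2) summable_on UNIV}"

definition l2norm :: "(int \<Rightarrow> complex) \<Rightarrow> real" where
  "l2norm x = sqrt (infsum (\<lambda>k. (cmod (x k))^2) UNIV)"

definition mapply :: "mat \<Rightarrow> (int \<Rightarrow> complex) \<Rightarrow> (int \<Rightarrow> complex)" where
  "mapply M x = (\<lambda>i. infsum (\<lambda>j. M i j * x j) UNIV)"

definition bounded_op :: "mat \<Rightarrow> bool" where
  "bounded_op M \<longleftrightarrow> (\<exists>C. \<forall>x\<in>l2. (\<forall>i. (\<lambda>j. M i j * x j) summable_on UNIV)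
      \<and> mapply M x \<in> l2 \<and> l2norm (mapply M x) \<le> C * l2norm x)"

definition opnorm :: "mat \<Rightarrow> real" where
  "opnorm M = Sup {l2norm (mapply M x) | x. x \<in> l2 \<and> l2norm x \<le> 1}"

definition mmult :: "mat \<Rightarrow> mat \<Rightarrow> mat" where
  "mmult M N = (\<lambda>i k. infsum (\<lambda>j. M i j * N j k) UNIV)"

definition madd :: "mat \<Rightarrow> mat \<Rightarrow> mat" where
  "madd M N = (\<lambda>i j. M i j + N i j)"

definition mdiff :: "mat \<Rightarrow> mat \<Rightarrow> mat" where
  "mdiff M N = (\<lambda>i j. M i j - N i j)"

definition mscale :: "complex \<Rightarrow> mat \<Rightarrow> mat" where
  "mscale c M = (\<lambda>i j. c * M i j)"

definition madj :: "mat \<Rightarrow> mat" where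
  "madj M = (\<lambda>i j. cnj (M j i))"

definition commutator :: "mat \<Rightarrow> mat \<Rightarrow> mat" where
  "commutator M N = mdiff (mmult M N) (mmult N M)"

definition Upow :: "int \<Rightarrow> mat" where
  "Upow n = (\<lambda>i j. if i = j + n then 1 else 0)"

text \<open>a(K): the diagonal operator a(K) E_k = a(k) E_k.\<close>
definition diagop :: "(int \<Rightarrow> complex) \<Rightarrow> mat" where
  "diagop a = (\<lambda>i j. if i = j then a i else 0)"

definition has_limits_pm :: "(int \<Rightarrow> complex) \<Rightarrow> bool" where
  "has_limits_pm a \<longleftrightarrow> (\<exists>L. (a \<longlongrightarrow> L) at_top) \<and> (\<exists>L. (a \<longlongrightarrow> L) at_bot)"

definition eventually_const :: "(int \<Rightarrow> complex) \<Rightarrow> bool" where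
  "eventually_const a \<longleftrightarrow> (\<exists>k0 c1 c2. (\<forall>k\<ge>k0. a k = c1) \<and> (\<forall>k\<le>-k0. a k = c2))"

definition convergent_increments :: "(int \<Rightarrow> complex) \<Rightarrow> bool" where
  "convergent_increments \<beta> \<longleftrightarrow> has_limits_pm (\<lambda>k. \<beta> k - \<beta> (k - 1))"

definition Cstar_A :: "mat set" where
  "Cstar_A = \<Inter>{S. S \<subseteq> {M. bounded_op M}
     \<and> Upow 1 \<in> S
     \<and> (\<forall>a. has_limits_pm a \<longrightarrow> diagop a \<in> S)
     \<and> (\<forall>M\<in>S. \<forall>N\<in>S. madd M N \<in> S \<and> mmult M N \<in> S)
     \<and> (\<forall>c. \<forall>M\<in>S. mscale c M \<in> S)
     \<and> (\<forall>M\<in>S. madj M \<in> S)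
     \<and> (\<forall>f M. (\<forall>m::nat. f m \<in> S) \<and> bounded_op M
            \<and> (\<lambda>m. opnorm (mdiff (f m) M)) \<longlonglongrightarrow> 0 \<longrightarrow> M \<in> S)}"

definition smooth_A :: "mat set" where
  "smooth_A = {M. \<exists>N a. finite N \<and> (\<forall>n. eventually_const (a n))
      \<and> M = (\<lambda>i j. \<Sum>n\<in>N. mmult (Upow n) (diagop (a n)) i j)}"

definition rho :: "real \<Rightarrow> mat \<Rightarrow> mat" where
  "rho \<phi> M = mmult (mmult (diagop (\<lambda>k. exp (\<i> * of_real \<phi> * of_int k))) M)
                    (diagop (\<lambda>k. exp (- \<i> * of_real \<phi> * of_int k)))"

definition is_derivation :: "(mat \<Rightarrow> mat) \<Rightarrow> bool" where
  "is_derivation d \<longleftrightarrow> (\<forall>a\<in>smooth_A. d a \<in> Cstar_A)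
     \<and> (\<forall>a\<in>smooth_A. \<forall>b\<in>smooth_A. d (madd a b) = madd (d a) (d b))
     \<and> (\<forall>c. \<forall>a\<in>smooth_A. d (mscale c a) = mscale c (d a))
     \<and> (\<forall>a\<in>smooth_A. \<forall>b\<in>smooth_A. d (mmult a b) = madd (mmult a (d b)) (mmult (d a) b))"

definition n_covariant :: "int \<Rightarrow> (mat \<Rightarrow> mat) \<Rightarrow> bool" where
  "n_covariant n d \<longleftrightarrow> (\<forall>a\<in>smooth_A. \<forall>\<phi>\<in>{0..<2*pi}.
     d (rho \<phi> a) = mscale (exp (- \<i> * of_int n * of_real \<phi>)) (rho \<phi> (d a)))"

end

theory Submission
  imports Defs
begin

text \<open>
  Rotation covariance makes \<open>d\<close> raise the rotation degree by \<open>n\<close>: it maps \<open>U^m a(K)\<close>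
  into the \<open>(m+n)\<close>-th diagonal. Hence \<open>d(U) = U^(n+1) \<gamma>(K)\<close>, and \<open>d(P_k)\<close>, \<open>P_k\<close> the
  projection onto \<open>E_k\<close>, lives on the \<open>n\<close>-th diagonal; call \<open>\<beta>(k)\<close> its entry at \<open>(k+n, k)\<close>.
  For \<open>n \<noteq> 0\<close> the Leibniz rule for \<open>U P_k = P_(k+1) U\<close> gives \<open>\<gamma>(k) = \<beta>(k+1) - \<beta>(k)\<close>;
  for \<open>n = 0\<close> one takes for \<open>\<beta>\<close> an antiderivative of \<open>\<gamma>\<close> instead. As \<open>U\<close>, \<open>U^-1\<close> and
  the diagonal operators generate the smooth algebra, the Leibniz rule then yields
  \<open>d = [U^n \<beta>(K), -]\<close> on all of it.

  The increments of \<open>\<beta>\<close> form the diagonal \<open>\<gamma>\<close> of \<open>d(U)\<close>, an element of the C*-algebra.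
  Every element of that algebra is an operator-norm limit of band matrices whose diagonals
  converge at \<open>\<plusminus>\<infinity>\<close>; as matrix entries are bounded by the operator norm, the diagonals of
  the limit converge as well. Uniqueness follows by evaluating the commutator on \<open>P_k\<close>
  (if \<open>n \<noteq> 0\<close>) or on \<open>U\<close> (if \<open>n = 0\<close>).
\<close>

section \<open>Infinite sums and square-summable sequences\<close>

definition unit_vec :: "int \<Rightarrow> int \<Rightarrow> complex" where
  "unit_vec j = (\<lambda>i. if i = j then 1 else 0)"

lemma infsum_single:
  fixes f :: "'a \<Rightarrow> 'b::{comm_monoid_add, t2_space}"
  assumes "\<And>j. j \<noteq> a \<Longrightarrow> f j = 0"
  shows "infsum f UNIV = f a"
  using infsum_cong_neutral[of "{a}" UNIV f f] assms by auto

lemma has_sum_single: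
  fixes f :: "'a \<Rightarrow> 'b::{comm_monoid_add, t2_space}"
  assumes "\<And>j. j \<noteq> a \<Longrightarrow> f j = 0"
  shows "(f has_sum f a) UNIV"
  by (rule has_sum_finite_neutralI[where B="{a}"]) (use assms in auto)

lemma has_sum_sum:
  fixes f :: "'i \<Rightarrow> 'a \<Rightarrow> 'b::topological_comm_monoid_add"
  assumes "finite I" "\<And>i. i \<in> I \<Longrightarrow> (f i has_sum s i) A"
  shows "((\<lambda>x. \<Sum>i\<in>I. f i x) has_sum (\<Sum>i\<in>I. s i)) A"
  using assms by (induction I rule: finite_induct) (auto intro: has_sum_add)

lemma infsum_diff:
  fixes f g :: "'a \<Rightarrow> 'b::{topological_ab_group_add, t2_space}"
  assumes "f summable_on A" "g summable_on A"
  shows "infsum (\<lambda>x. f x - g x) A = infsum f A - infsum g A"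
proof -
  have "((\<lambda>x. - g x) has_sum - infsum g A) A" by (simp add: has_sum_uminus assms(2))
  then have "((\<lambda>x. f x + - g x) has_sum infsum f A + - infsum g A) A"
    using has_sum_add[OF has_sum_infsum[OF assms(1)]] by blast
  then show ?thesis by (simp add: infsumI)
qed

lemma l2norm_nonneg: "0 \<le> l2norm x"
  by (simp add: l2norm_def infsum_nonneg)

lemma power2_l2norm: "(l2norm x)^2 = infsum (\<lambda>k. (cmod (x k))^2) UNIV"
  unfolding l2norm_def by (simp add: infsum_nonneg)

lemma has_sum_power2_l2norm: "x \<in> l2 \<Longrightarrow> ((\<lambda>k. (cmod (x k))^2) has_sum (l2norm x)^2) UNIV"
  by (simp add: power2_l2norm l2_def)

lemma l2normI:
  assumes "((\<lambda>k. (cmod (x k))^2) has_sum s^2) UNIV" "0 \<le> s"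
  shows "x \<in> l2" "l2norm x = s"
  using assms by (auto simp: l2_def l2norm_def summable_on_def infsumI)

lemma norm_le_l2norm:
  assumes "x \<in> l2" shows "cmod (x k) \<le> l2norm x"
proof -
  have "(\<Sum>j\<in>{k}. (cmod (x j))^2) \<le> infsum (\<lambda>j. (cmod (x j))^2) UNIV"
    by (rule finite_sum_le_infsum) (use assms in \<open>auto simp: l2_def\<close>)
  then have "(cmod (x k))^2 \<le> (l2norm x)^2" by (simp add: power2_l2norm)
  then show ?thesis using l2norm_nonneg[of x] by (rule power2_le_imp_le)
qed

lemma l2_if_partial_sums_bounded:
  assumes "\<And>F. finite F \<Longrightarrow> (\<Sum>k\<in>F. (cmod (x k))^2) \<le> C^2" "0 \<le> C"
  shows "x \<in> l2" "l2norm x \<le> C"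
proof -
  have s: "(\<lambda>k. (cmod (x k))^2) summable_on UNIV"
    by (rule nonneg_bdd_above_summable_on) (auto intro!: bdd_aboveI2[where M="C^2"] assms)
  have "infsum (\<lambda>k. (cmod (x k))^2) UNIV \<le> C^2"
    by (rule infsum_le_finite_sums[OF s]) (use assms in auto)
  then have "sqrt (infsum (\<lambda>k. (cmod (x k))^2) UNIV) \<le> sqrt (C^2)" by (rule real_sqrt_le_mono)
  then show "x \<in> l2" "l2norm x \<le> C" using s assms(2) unfolding l2_def l2norm_def by simp_all
qed

lemma l2_finite_support:
  assumes "finite F"
  shows "(\<lambda>k. if k \<in> F then v k else 0) \<in> l2"
    and "(l2norm (\<lambda>k. if k \<in> F then v k else 0))^2 = (\<Sum>k\<in>F. (cmod (v k))^2)"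
proof -
  have "((\<lambda>k. (cmod (if k \<in> F then v k else 0))^2) has_sum (\<Sum>k\<in>F. (cmod (v k))^2)) UNIV"
    by (rule has_sum_finite_neutralI[where B=F]) (use assms in auto)
  then show "(\<lambda>k. if k \<in> F then v k else 0) \<in> l2"
    and "(l2norm (\<lambda>k. if k \<in> F then v k else 0))^2 = (\<Sum>k\<in>F. (cmod (v k))^2)"
    unfolding l2_def power2_l2norm by (auto simp: summable_on_def infsumI)
qed

lemma unit_vec_l2: "unit_vec j \<in> l2" "l2norm (unit_vec j) = 1"
proof -
  have "((\<lambda>k. (cmod (unit_vec j k))^2) has_sum 1^2) UNIV"
    using has_sum_single[of j "\<lambda>k. (cmod (unit_vec j k))^2"] by (simp add: unit_vec_def)
  then show "unit_vec j \<in> l2" "l2norm (unit_vec j) = 1"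
    using l2normI[of "unit_vec j" 1] by simp_all
qed

lemma entry_eq_0_if_l2norm_eq_0: "x \<in> l2 \<Longrightarrow> l2norm x = 0 \<Longrightarrow> x k = 0"
  using norm_le_l2norm[of x k] by simp

lemma l2_cmult:
  assumes "x \<in> l2"
  shows "(\<lambda>k. a * x k) \<in> l2" "l2norm (\<lambda>k. a * x k) = cmod a * l2norm x"
proof -
  have "((\<lambda>k. (cmod (a * x k))^2) has_sum (cmod a * l2norm x)^2) UNIV"
    using has_sum_cmult_right[OF has_sum_power2_l2norm[OF assms], of "(cmod a)^2"]
    by (simp add: norm_mult power_mult_distrib)
  then show "(\<lambda>k. a * x k) \<in> l2" "l2norm (\<lambda>k. a * x k) = cmod a * l2norm x"
    using l2normI l2norm_nonneg by auto
qed

lemma l2_cnj: "x \<in> l2 \<Longrightarrow> (\<lambda>k. cnj (x k)) \<in> l2"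
  and l2norm_cnj: "l2norm (\<lambda>k. cnj (x k)) = l2norm x"
  by (simp_all add: l2_def l2norm_def)

lemma weighted_amgm:
  fixes a b t :: real
  assumes "t > 0" shows "a * b \<le> (t * a^2 + b^2 / t) / 2"
proof -
  have "(t * a^2 + b^2 / t) / 2 - a * b = (t * a - b)^2 / (2 * t)"
    using assms by (simp add: field_simps power2_eq_square)
  then show ?thesis using assms by (smt (verit) divide_nonneg_pos zero_le_power2)
qed

lemma l2_cauchy_schwarz:
  assumes x: "x \<in> l2" and y: "y \<in> l2"
  shows "(\<lambda>k. cmod (x k * y k)) summable_on UNIV"
    and "infsum (\<lambda>k. cmod (x k * y k)) UNIV \<le> l2norm x * l2norm y"
proof -
  have amgm: "cmod (x k * y k) \<le> (t * (cmod (x k))^2 + (cmod (y k))^2 / t) / 2" if "t > 0" for t k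
    unfolding norm_mult by (rule weighted_amgm[OF that])
  have bound: "((\<lambda>k. (t * (cmod (x k))^2 + (cmod (y k))^2 / t) / 2) has_sum
      ((t * (l2norm x)^2 + (l2norm y)^2 / t) / 2)) UNIV" for t
    using has_sum_cmult_left[OF has_sum_add[OF has_sum_cmult_right[OF has_sum_power2_l2norm[OF x], of t]
        has_sum_cmult_left[OF has_sum_power2_l2norm[OF y], of "1/t"]], of "1/2"]
    by simp
  show abs: "(\<lambda>k. cmod (x k * y k)) summable_on UNIV"
    by (rule summable_on_comparison_test[OF has_sum_imp_summable[OF bound[of 1]]])
      (use amgm[of 1] in auto)
  show "infsum (\<lambda>k. cmod (x k * y k)) UNIV \<le> l2norm x * l2norm y"
  proof (cases "l2norm x = 0 \<or> l2norm y = 0")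
    case True
    then have "(\<lambda>k. cmod (x k * y k)) = (\<lambda>_. 0)" using entry_eq_0_if_l2norm_eq_0 x y by auto
    then show ?thesis using l2norm_nonneg[of x] l2norm_nonneg[of y] by simp
  next
    case False
    then have px: "l2norm x > 0" and py: "l2norm y > 0"
      using l2norm_nonneg by (auto simp: order_le_less)
    \<comment> \<open>the weight that makes the AM-GM bound sharp\<close>
    define t where "t = l2norm y / l2norm x"
    have tp: "t > 0" using px py by (simp add: t_def)
    have "infsum (\<lambda>k. cmod (x k * y k)) UNIV \<le> (t * (l2norm x)^2 + (l2norm y)^2 / t) / 2"
      by (rule has_sum_mono[OF has_sum_infsum[OF abs] bound]) (use amgm[OF tp] in auto)
    also have "\<dots> = l2norm x * l2norm y"
    proof -
      have "t * (l2norm x)^2 = l2norm x * l2norm y" "(l2norm y)^2 / t = l2norm x * l2norm y"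
        using px py by (simp_all add: t_def power2_eq_square)
      then show ?thesis by simp
    qed
    finally show ?thesis .
  qed
qed

lemma l2_add:
  assumes x: "x \<in> l2" and y: "y \<in> l2"
  shows "(\<lambda>k. x k + y k) \<in> l2" "l2norm (\<lambda>k. x k + y k) \<le> l2norm x + l2norm y"
proof -
  note cs = l2_cauchy_schwarz[OF x y]
  have h: "((\<lambda>k. (cmod (x k))^2 + (cmod (y k))^2 + 2 * cmod (x k * y k)) has_sum
      ((l2norm x)^2 + (l2norm y)^2 + 2 * infsum (\<lambda>k. cmod (x k * y k)) UNIV)) UNIV"
    by (intro has_sum_add has_sum_power2_l2norm x y has_sum_cmult_right has_sum_infsum cs)
  have pw: "(cmod (x k + y k))^2 \<le> (cmod (x k))^2 + (cmod (y k))^2 + 2 * cmod (x k * y k)" for k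
    using power_mono[OF norm_triangle_ineq[of "x k" "y k"], of 2]
    by (simp add: power2_sum norm_mult)
  have s: "(\<lambda>k. (cmod (x k + y k))^2) summable_on UNIV"
    by (rule summable_on_comparison_test[OF has_sum_imp_summable[OF h]]) (use pw in auto)
  then show "(\<lambda>k. x k + y k) \<in> l2" by (simp add: l2_def)
  have "(l2norm (\<lambda>k. x k + y k))^2
      \<le> (l2norm x)^2 + (l2norm y)^2 + 2 * infsum (\<lambda>k. cmod (x k * y k)) UNIV"
    unfolding power2_l2norm[of "\<lambda>k. x k + y k"]
    by (rule has_sum_mono[OF has_sum_infsum[OF s] h]) (use pw in auto)
  also have "\<dots> \<le> (l2norm x + l2norm y)^2" using cs(2) by (simp add: power2_sum)
  finally show "l2norm (\<lambda>k. x k + y k) \<le> l2norm x + l2norm y"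
    by (rule power2_le_imp_le) (simp add: l2norm_nonneg)
qed

section \<open>Bounded matrices\<close>

definition op_bound :: "mat \<Rightarrow> real \<Rightarrow> bool" where
  "op_bound M c \<longleftrightarrow> (\<forall>x\<in>l2. (\<forall>i. (\<lambda>j. M i j * x j) summable_on UNIV)
      \<and> mapply M x \<in> l2 \<and> l2norm (mapply M x) \<le> c * l2norm x)"

lemma bounded_op_iff_op_bound: "bounded_op M \<longleftrightarrow> (\<exists>c. op_bound M c)"
  unfolding bounded_op_def op_bound_def by simp

lemma op_boundD:
  assumes "op_bound M c" "x \<in> l2"
  shows "(\<lambda>j. M i j * x j) summable_on UNIV" "mapply M x \<in> l2" "l2norm (mapply M x) \<le> c * l2norm x"
  using assms unfolding op_bound_def by auto

lemma mapply_unit_vec: "mapply M (unit_vec j) = (\<lambda>i. M i j)"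
  unfolding mapply_def by (rule ext, subst infsum_single[where a=j]) (auto simp: unit_vec_def)

lemma op_bound_nonneg: "op_bound M c \<Longrightarrow> 0 \<le> c"
  using op_boundD(3)[of M c "unit_vec 0"] unit_vec_l2 l2norm_nonneg[of "mapply M (unit_vec 0)"] by simp

lemma op_bound_column:
  assumes "op_bound M c" shows "(\<lambda>i. M i j) \<in> l2" "l2norm (\<lambda>i. M i j) \<le> c"
  using op_boundD[OF assms unit_vec_l2(1)[of j]] unit_vec_l2(2)[of j] by (simp_all add: mapply_unit_vec)

lemma op_bound_entry: "op_bound M c \<Longrightarrow> cmod (M i j) \<le> c"
  using op_bound_column[of M c j] norm_le_l2norm[of "\<lambda>i. M i j" i] by simp

lemma op_bound_mono: "op_bound M c \<Longrightarrow> c \<le> c' \<Longrightarrow> op_bound M c'"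
  unfolding op_bound_def using l2norm_nonneg by (meson mult_right_mono order_trans)

lemma mapply_add:
  assumes "op_bound M c" "x \<in> l2" "y \<in> l2"
  shows "mapply M (\<lambda>k. x k + y k) = (\<lambda>i. mapply M x i + mapply M y i)"
  unfolding mapply_def distrib_left
  by (rule ext, rule infsum_add) (use op_boundD[OF assms(1)] assms(2,3) in auto)

lemma mapply_cmult: "mapply M (\<lambda>k. a * x k) = (\<lambda>i. a * mapply M x i)"
  unfolding mapply_def mult.left_commute[of _ a] by (rule ext, rule infsum_cmult_right')

lemma tendsto_l2norm_tail:
  assumes x: "x \<in> l2"
  shows "((\<lambda>F. l2norm (\<lambda>k. if k \<in> F then 0 else x k)) \<longlongrightarrow> 0) (finite_subsets_at_top UNIV)"
proof -
  have eq: "l2norm (\<lambda>k. if k \<in> F then 0 else x k) = sqrt ((l2norm x)^2 - (\<Sum>k\<in>F. (cmod (x k))^2))"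
    if "finite F" for F
  proof -
    have "((\<lambda>k. (cmod (x k))^2 + - (if k \<in> F then (cmod (x k))^2 else 0)) has_sum
        (l2norm x)^2 + - (\<Sum>k\<in>F. (cmod (x k))^2)) UNIV"
      by (intro has_sum_add has_sum_power2_l2norm x has_sum_uminusI has_sum_finite_neutralI[where B=F])
        (use that in auto)
    then have "infsum (\<lambda>k. (cmod (x k))^2 + - (if k \<in> F then (cmod (x k))^2 else 0)) UNIV
        = (l2norm x)^2 - (\<Sum>k\<in>F. (cmod (x k))^2)"
      by (simp add: infsumI)
    moreover have "(\<lambda>k. (cmod (x k))^2 + - (if k \<in> F then (cmod (x k))^2 else 0))
        = (\<lambda>k. (cmod (if k \<in> F then 0 else x k))^2)"
      by auto
    ultimately show ?thesis unfolding l2norm_def by (simp only:)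
  qed
  have "((\<lambda>F. sqrt ((l2norm x)^2 - (\<Sum>k\<in>F. (cmod (x k))^2))) \<longlongrightarrow> sqrt ((l2norm x)^2 - (l2norm x)^2))
      (finite_subsets_at_top UNIV)"
    using has_sum_power2_l2norm[OF x] unfolding has_sum_def by (intro tendsto_intros)
  moreover have "\<forall>\<^sub>F F in finite_subsets_at_top UNIV.
      sqrt ((l2norm x)^2 - (\<Sum>k\<in>F. (cmod (x k))^2)) = l2norm (\<lambda>k. if k \<in> F then 0 else x k)"
    by (auto simp: eq)
  ultimately show ?thesis by (simp add: Lim_transform_eventually)
qed

lemma has_sum_bounded_functional:
  fixes psi :: "(int \<Rightarrow> complex) \<Rightarrow> complex"
  assumes add: "\<And>v w. v \<in> l2 \<Longrightarrow> w \<in> l2 \<Longrightarrow> psi (\<lambda>k. v k + w k) = psi v + psi w"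
    and scal: "\<And>v a. v \<in> l2 \<Longrightarrow> psi (\<lambda>k. a * v k) = a * psi v"
    and bnd: "\<And>v. v \<in> l2 \<Longrightarrow> cmod (psi v) \<le> C * l2norm v"
    and x: "x \<in> l2"
  shows "((\<lambda>k. psi (unit_vec k) * x k) has_sum psi x) UNIV"
proof -
  define tail where "tail F = (\<lambda>k. if k \<in> F then 0 else x k)" for F
  have tail_l2: "tail F \<in> l2" for F
    using summable_on_comparison_test[OF x[unfolded l2_def, simplified], of "\<lambda>k. (cmod (tail F k))^2"]
    by (auto simp: l2_def tail_def)
  have split: "psi x = (\<Sum>k\<in>F. psi (unit_vec k) * x k) + psi (tail F)" if "finite F" for F
    using that
  proof (induction F rule: finite_induct)
    case empty
    then show ?case by (simp add: tail_def)
  next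
    case (insert a F)
    have "tail F = (\<lambda>k. tail (insert a F) k + x a * unit_vec a k)"
      using insert(2) by (auto simp: tail_def unit_vec_def)
    then have "psi (tail F) = psi (tail (insert a F)) + x a * psi (unit_vec a)"
      using add[OF tail_l2 l2_cmult(1)[OF unit_vec_l2(1)]] scal[OF unit_vec_l2(1)] by simp
    then show ?case using insert by (simp add: algebra_simps)
  qed
  have "((\<lambda>F. (\<Sum>k\<in>F. psi (unit_vec k) * x k) - psi x) \<longlongrightarrow> 0) (finite_subsets_at_top UNIV)"
  proof (rule Lim_null_comparison)
    show "\<forall>\<^sub>F F in finite_subsets_at_top UNIV.
        cmod ((\<Sum>k\<in>F. psi (unit_vec k) * x k) - psi x) \<le> C * l2norm (tail F)"
      using split bnd[OF tail_l2] by (auto simp: norm_minus_commute)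
    show "((\<lambda>F. C * l2norm (tail F)) \<longlongrightarrow> 0) (finite_subsets_at_top UNIV)"
      using tendsto_mult_right_zero[OF tendsto_l2norm_tail[OF x]] by (simp add: tail_def)
  qed
  then show ?thesis unfolding has_sum_def by (subst Lim_null)
qed

lemma op_bound_madd:
  assumes X: "op_bound X c" and Y: "op_bound Y c'"
  shows "op_bound (madd X Y) (c + c')"
  unfolding op_bound_def
proof (intro ballI conjI allI)
  fix x assume x: "x \<in> l2"
  show "(\<lambda>j. madd X Y i j * x j) summable_on UNIV" for i
    unfolding madd_def distrib_right
    by (rule summable_on_add) (use op_boundD[OF X x] op_boundD[OF Y x] in auto)
  have eq: "mapply (madd X Y) x = (\<lambda>i. mapply X x i + mapply Y x i)"
    unfolding mapply_def madd_def distrib_right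
    by (rule ext, rule infsum_add) (use op_boundD[OF X x] op_boundD[OF Y x] in auto)
  show "mapply (madd X Y) x \<in> l2"
    unfolding eq by (rule l2_add) (use op_boundD[OF X x] op_boundD[OF Y x] in auto)
  show "l2norm (mapply (madd X Y) x) \<le> (c + c') * l2norm x"
    using l2_add(2)[OF op_boundD(2)[OF X x] op_boundD(2)[OF Y x]]
      op_boundD(3)[OF X x] op_boundD(3)[OF Y x]
    unfolding eq by (simp add: distrib_right)
qed

lemma op_bound_mscale:
  assumes X: "op_bound X c"
  shows "op_bound (mscale a X) (cmod a * c)"
  unfolding op_bound_def
proof (intro ballI conjI allI)
  fix x assume x: "x \<in> l2"
  show "(\<lambda>j. mscale a X i j * x j) summable_on UNIV" for i
    unfolding mscale_def mult.assoc by (rule summable_on_cmult_right) (use op_boundD[OF X x] in auto)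
  have eq: "mapply (mscale a X) x = (\<lambda>i. a * mapply X x i)"
    unfolding mapply_def mscale_def mult.assoc by (rule ext, rule infsum_cmult_right')
  show "mapply (mscale a X) x \<in> l2"
    unfolding eq by (rule l2_cmult) (use op_boundD[OF X x] in auto)
  show "l2norm (mapply (mscale a X) x) \<le> (cmod a * c) * l2norm x"
    using l2_cmult(2)[OF op_boundD(2)[OF X x]] op_boundD(3)[OF X x]
    unfolding eq by (simp add: mult.assoc mult_left_mono)
qed

lemma mdiff_eq_madd_mscale: "mdiff X Y = madd X (mscale (-1) Y)"
  by (auto simp: mdiff_def madd_def mscale_def)

lemma op_bound_mdiff: "op_bound X c \<Longrightarrow> op_bound Y c' \<Longrightarrow> op_bound (mdiff X Y) (c + c')"
  using op_bound_madd[OF _ op_bound_mscale[of Y c' "-1"]] unfolding mdiff_eq_madd_mscale by simp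

lemma op_bound_zero: "0 \<le> c \<Longrightarrow> op_bound (\<lambda>i j. 0) c"
  unfolding op_bound_def mapply_def using l2_finite_support[of "{}" "\<lambda>_. 0"]
  by (auto simp: l2norm_nonneg)

lemma op_bound_sum:
  assumes "finite F" "\<And>m. m \<in> F \<Longrightarrow> op_bound (A m) (c m)"
  shows "op_bound (\<lambda>i j. \<Sum>m\<in>F. A m i j) (\<Sum>m\<in>F. c m)"
  using assms
proof (induction F rule: finite_induct)
  case empty
  then show ?case using op_bound_zero by simp
next
  case (insert a F)
  have "op_bound (madd (A a) (\<lambda>i j. \<Sum>m\<in>F. A m i j)) (c a + (\<Sum>m\<in>F. c m))"
    by (rule op_bound_madd) (use insert in auto)
  moreover have "madd (A a) (\<lambda>i j. \<Sum>m\<in>F. A m i j) = (\<lambda>i j. \<Sum>m\<in>insert a F. A m i j)"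
    using insert by (auto simp: madd_def)
  ultimately show ?case using insert by simp
qed

lemma mapply_mmult:
  assumes X: "op_bound X c" and Y: "op_bound Y c'" and x: "x \<in> l2"
  shows "((\<lambda>k. mmult X Y i k * x k) has_sum mapply X (mapply Y x) i) UNIV"
proof -
  define psi where "psi v = mapply X (mapply Y v) i" for v
  have "((\<lambda>k. psi (unit_vec k) * x k) has_sum psi x) UNIV"
  proof (rule has_sum_bounded_functional[where C="c * c'"])
    fix v w assume v: "v \<in> l2" and w: "w \<in> l2"
    show "psi (\<lambda>k. v k + w k) = psi v + psi w"
      unfolding psi_def mapply_add[OF Y v w]
      by (subst mapply_add[OF X]) (use op_boundD[OF Y v] op_boundD[OF Y w] in auto)
  next
    fix v a
    show "psi (\<lambda>k. a * v k) = a * psi v" unfolding psi_def mapply_cmult ..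
  next
    fix v assume v: "v \<in> l2"
    have "cmod (psi v) \<le> l2norm (mapply X (mapply Y v))"
      unfolding psi_def by (rule norm_le_l2norm) (use op_boundD[OF X] op_boundD[OF Y v] in auto)
    also have "\<dots> \<le> c * l2norm (mapply Y v)" using op_boundD[OF X] op_boundD[OF Y v] by auto
    also have "\<dots> \<le> c * (c' * l2norm v)"
      using op_boundD[OF Y v] op_bound_nonneg[OF X] by (intro mult_left_mono) auto
    finally show "cmod (psi v) \<le> c * c' * l2norm v" by (simp add: mult.assoc)
  qed (rule x)
  moreover have "psi (unit_vec k) = mmult X Y i k" for k
    unfolding psi_def mapply_unit_vec by (simp add: mapply_def mmult_def)
  ultimately show ?thesis unfolding psi_def by simp
qed

lemma op_bound_mmult:
  assumes X: "op_bound X c" and Y: "op_bound Y c'"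
  shows "op_bound (mmult X Y) (c * c')"
  unfolding op_bound_def
proof (intro ballI conjI allI)
  fix x assume x: "x \<in> l2"
  note prod = mapply_mmult[OF X Y x]
  show "(\<lambda>k. mmult X Y i k * x k) summable_on UNIV" for i
    using prod[of i] by (auto simp: summable_on_def)
  have eq: "mapply (mmult X Y) x = mapply X (mapply Y x)"
    using prod by (auto simp: mapply_def intro!: ext infsumI)
  show "mapply (mmult X Y) x \<in> l2" unfolding eq using op_boundD[OF X] op_boundD[OF Y x] by auto
  have "l2norm (mapply X (mapply Y x)) \<le> c * l2norm (mapply Y x)"
    using op_boundD[OF X] op_boundD[OF Y x] by auto
  also have "\<dots> \<le> c * (c' * l2norm x)"
    using op_boundD[OF Y x] op_bound_nonneg[OF X] by (intro mult_left_mono) auto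
  finally show "l2norm (mapply (mmult X Y) x) \<le> c * c' * l2norm x"
    unfolding eq by (simp add: mult.assoc)
qed

lemma summable_on_column_mult:
  assumes "op_bound X c" "x \<in> l2"
  shows "(\<lambda>j. cnj (X j i) * x j) summable_on UNIV"
  using l2_cauchy_schwarz(1)[OF l2_cnj[OF op_bound_column(1)[OF assms(1)]] assms(2)]
  by (rule abs_summable_summable)

text \<open>The adjoint relation \<open><v, X* x> = <X v, x>\<close> for finitely supported \<open>v\<close>.\<close>

lemma sum_mult_cnj_mapply_madj:
  assumes X: "op_bound X c" and x: "x \<in> l2" and F: "finite F"
  shows "(\<Sum>i\<in>F. v i * cnj (mapply (madj X) x i))
    = infsum (\<lambda>j. mapply X (\<lambda>i. if i \<in> F then v i else 0) j * cnj (x j)) UNIV"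
proof -
  have col: "((\<lambda>j. v i * (X j i * cnj (x j))) has_sum v i * cnj (mapply (madj X) x i)) UNIV" for i
  proof -
    have "((\<lambda>j. cnj (X j i) * x j) has_sum mapply (madj X) x i) UNIV"
      using summable_on_column_mult[OF X x, of i] by (simp add: mapply_def madj_def)
    then have "((\<lambda>j. cnj (cnj (X j i) * x j)) has_sum cnj (mapply (madj X) x i)) UNIV"
      by (simp only: has_sum_cnj_iff)
    then show ?thesis by (intro has_sum_cmult_right) simp
  qed
  have "mapply X (\<lambda>i. if i \<in> F then v i else 0) j = (\<Sum>i\<in>F. X j i * v i)" for j
  proof -
    have "mapply X (\<lambda>i. if i \<in> F then v i else 0) j = infsum (\<lambda>i. X j i * (if i \<in> F then v i else 0)) F"
      unfolding mapply_def by (rule infsum_cong_neutral) auto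
    then show ?thesis using F by simp
  qed
  moreover have "((\<lambda>j. \<Sum>i\<in>F. v i * (X j i * cnj (x j))) has_sum
      (\<Sum>i\<in>F. v i * cnj (mapply (madj X) x i))) UNIV"
    by (rule has_sum_sum[OF F col])
  ultimately have "((\<lambda>j. mapply X (\<lambda>i. if i \<in> F then v i else 0) j * cnj (x j)) has_sum
      (\<Sum>i\<in>F. v i * cnj (mapply (madj X) x i))) UNIV"
    by (simp add: sum_distrib_left mult_ac)
  then show ?thesis by (simp add: infsumI)
qed

lemma le_power2_if_le_mult_sqrt:
  fixes S A :: real
  assumes "0 \<le> S" "0 \<le> A" "S \<le> A * sqrt S"
  shows "S \<le> A^2"
proof (cases "S = 0")
  case False
  then have "sqrt S * sqrt S \<le> A * sqrt S" "sqrt S > 0" using assms by simp_all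
  then have "sqrt S \<le> A" by (rule mult_right_le_imp_le)
  then have "(sqrt S)^2 \<le> A^2" using assms(1) by (intro power_mono) simp_all
  then show ?thesis using assms(1) by simp
qed simp

lemma partial_sums_mapply_madj_le:
  assumes X: "op_bound X c" and x: "x \<in> l2" and F: "finite F"
  shows "(\<Sum>i\<in>F. (cmod (mapply (madj X) x i))^2) \<le> (c * l2norm x)^2"
proof -
  define w where "w = mapply (madj X) x"
  define S where "S = (\<Sum>i\<in>F. (cmod (w i))^2)"
  define u where "u = (\<lambda>i. if i \<in> F then w i else 0)"
  have S0: "0 \<le> S" unfolding S_def by (simp add: sum_nonneg)
  have u: "u \<in> l2" "l2norm u = sqrt S"
    using l2_finite_support[OF F, of w] l2norm_nonneg[of u] by (auto simp: u_def S_def real_sqrt_unique)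
  have "complex_of_real S = (\<Sum>i\<in>F. w i * cnj (w i))"
    unfolding S_def of_real_sum by (rule sum.cong) (simp_all only: complex_norm_square)
  also have "\<dots> = infsum (\<lambda>j. mapply X u j * cnj (x j)) UNIV"
    unfolding w_def u_def by (rule sum_mult_cnj_mapply_madj[OF X x F])
  finally have S_eq: "complex_of_real S = infsum (\<lambda>j. mapply X u j * cnj (x j)) UNIV" .
  note cs = l2_cauchy_schwarz[OF op_boundD(2)[OF X u(1)] l2_cnj[OF x], unfolded l2norm_cnj]
  have "S = cmod (complex_of_real S)" using S0 by (simp only: norm_of_real abs_of_nonneg)
  also have "\<dots> \<le> infsum (\<lambda>j. cmod (mapply X u j * cnj (x j))) UNIV"
    unfolding S_eq by (rule norm_infsum_bound) (use cs in auto)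
  also have "\<dots> \<le> l2norm (mapply X u) * l2norm x" by (rule cs(2))
  also have "\<dots> \<le> c * sqrt S * l2norm x"
    using op_boundD(3)[OF X u(1)] l2norm_nonneg[of x] unfolding u(2) by (rule mult_right_mono)
  also have "\<dots> = c * l2norm x * sqrt S" by simp
  finally have "S \<le> (c * l2norm x)^2"
    using S0 op_bound_nonneg[OF X] l2norm_nonneg[of x] by (intro le_power2_if_le_mult_sqrt) auto
  then show ?thesis by (simp add: S_def w_def)
qed

lemma op_bound_madj:
  assumes X: "op_bound X c"
  shows "op_bound (madj X) c"
  unfolding op_bound_def
proof (intro ballI conjI allI)
  fix x assume x: "x \<in> l2"
  show "(\<lambda>j. madj X i j * x j) summable_on UNIV" for i
    using summable_on_column_mult[OF X x] by (simp add: madj_def)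
  show "mapply (madj X) x \<in> l2" "l2norm (mapply (madj X) x) \<le> c * l2norm x"
    using l2_if_partial_sums_bounded[OF partial_sums_mapply_madj_le[OF X x]]
      op_bound_nonneg[OF X] l2norm_nonneg[of x] by auto
qed

lemma le_opnorm:
  assumes X: "bounded_op X" and x: "x \<in> l2" "l2norm x \<le> 1"
  shows "l2norm (mapply X x) \<le> opnorm X"
  unfolding opnorm_def
proof (rule cSup_upper)
  obtain C where C: "op_bound X C" using X bounded_op_iff_op_bound by blast
  show "bdd_above {l2norm (mapply X x) | x. x \<in> l2 \<and> l2norm x \<le> 1}"
  proof (rule bdd_aboveI, safe)
    fix y assume y: "y \<in> l2" "l2norm y \<le> 1"
    have "l2norm (mapply X y) \<le> C * l2norm y" using op_boundD(3)[OF C y(1)] .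
    also have "\<dots> \<le> C" using y(2) op_bound_nonneg[OF C] by (simp add: mult_left_le)
    finally show "l2norm (mapply X y) \<le> C" .
  qed
qed (use x in blast)

lemma op_bound_opnorm:
  assumes X: "bounded_op X"
  shows "op_bound X (opnorm X)"
proof -
  obtain C where C: "op_bound X C" using X bounded_op_iff_op_bound by blast
  show ?thesis unfolding op_bound_def
  proof (intro ballI conjI allI)
    fix x assume x: "x \<in> l2"
    show "(\<lambda>j. X i j * x j) summable_on UNIV" "mapply X x \<in> l2" for i
      using op_boundD[OF C x] by auto
    show "l2norm (mapply X x) \<le> opnorm X * l2norm x"
    proof (cases "l2norm x = 0")
      case True
      then have "mapply X x = (\<lambda>i. 0)"
        unfolding mapply_def using entry_eq_0_if_l2norm_eq_0[OF x] by simp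
      then show ?thesis using True by (simp add: l2norm_def)
    next
      case False
      then have p: "l2norm x > 0" using l2norm_nonneg[of x] by simp
      define a where "a = complex_of_real (1 / l2norm x)"
      have a: "cmod a = 1 / l2norm x" unfolding a_def norm_of_real using p by simp
      have "l2norm (mapply X (\<lambda>k. a * x k)) \<le> opnorm X"
        using le_opnorm[OF X l2_cmult(1)[OF x]] l2_cmult(2)[OF x, of a] p by (simp add: a)
      moreover have "l2norm (mapply X (\<lambda>k. a * x k)) = l2norm (mapply X x) / l2norm x"
        unfolding mapply_cmult l2_cmult(2)[OF op_boundD(2)[OF C x]] a by simp
      ultimately show ?thesis using p by (simp add: divide_le_eq mult.commute)
    qed
  qed
qed

lemma has_limits_pm_const: "has_limits_pm (\<lambda>_. c)"
  unfolding has_limits_pm_def by auto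

lemma has_limits_pm_add: "has_limits_pm f \<Longrightarrow> has_limits_pm g \<Longrightarrow> has_limits_pm (\<lambda>k. f k + g k)"
  unfolding has_limits_pm_def by (auto intro: tendsto_add)

lemma has_limits_pm_mult: "has_limits_pm f \<Longrightarrow> has_limits_pm g \<Longrightarrow> has_limits_pm (\<lambda>k. f k * g k)"
  unfolding has_limits_pm_def by (auto intro: tendsto_mult)

lemma has_limits_pm_cnj: "has_limits_pm f \<Longrightarrow> has_limits_pm (\<lambda>k. cnj (f k))"
  unfolding has_limits_pm_def by (auto intro: tendsto_cnj)

lemma has_limits_pm_sum:
  "finite F \<Longrightarrow> (\<And>s. s \<in> F \<Longrightarrow> has_limits_pm (f s)) \<Longrightarrow> has_limits_pm (\<lambda>k. \<Sum>s\<in>F. f s k)"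
  by (induction F rule: finite_induct) (auto intro: has_limits_pm_const has_limits_pm_add)

lemma has_limits_pm_shift:
  assumes "has_limits_pm f" shows "has_limits_pm (\<lambda>k. f (k + s))"
proof -
  have "filterlim (\<lambda>k::int. k + s) at_top at_top"
    unfolding filterlim_at_top
    using eventually_mono[OF eventually_ge_at_top] by (metis diff_le_eq)
  moreover have "filterlim (\<lambda>k::int. k + s) at_bot at_bot"
    unfolding filterlim_at_bot
    using eventually_mono[OF eventually_le_at_bot] by (metis le_diff_eq)
  ultimately show ?thesis
    using assms unfolding has_limits_pm_def using filterlim_compose[of f] by blast
qed

lemma has_limits_pm_bounded:
  assumes "has_limits_pm f"
  obtains K where "\<And>k. cmod (f k) \<le> K"
proof -
  obtain L1 L2 where L1: "(f \<longlongrightarrow> L1) at_top" and L2: "(f \<longlongrightarrow> L2) at_bot"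
    using assms unfolding has_limits_pm_def by blast
  obtain N1 where N1: "\<And>k. k \<ge> N1 \<Longrightarrow> dist (f k) L1 < 1"
    using tendstoD[OF L1, of 1] unfolding eventually_at_top_linorder by auto
  obtain N2 where N2: "\<And>k. k \<le> N2 \<Longrightarrow> dist (f k) L2 < 1"
    using tendstoD[OF L2, of 1] unfolding eventually_at_bot_linorder by auto
  have "cmod (f k) \<le> (cmod L1 + 1) + (cmod L2 + 1) + (\<Sum>j\<in>{N2..N1}. cmod (f j))" for k
  proof -
    have "cmod (f k) \<le> cmod L1 + 1" if "k \<ge> N1"
      using N1[OF that] norm_triangle_ineq2[of "f k" L1] by (simp add: dist_norm)
    moreover have "cmod (f k) \<le> cmod L2 + 1" if "k \<le> N2"
      using N2[OF that] norm_triangle_ineq2[of "f k" L2] by (simp add: dist_norm)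
    moreover have "cmod (f k) \<le> (\<Sum>j\<in>{N2..N1}. cmod (f j))" if "N2 \<le> k" "k \<le> N1"
      using that by (intro member_le_sum) auto
    moreover have "0 \<le> (\<Sum>j\<in>{N2..N1}. cmod (f j))" by (simp add: sum_nonneg)
    ultimately show ?thesis
      using norm_ge_zero[of L1] norm_ge_zero[of L2] by (smt (verit))
  qed
  then show thesis by (rule that)
qed

lemma tendsto_of_uniform_approx:
  fixes g :: "'a \<Rightarrow> 'b::complete_space"
  assumes F: "F \<noteq> bot"
    and approx: "\<And>e. e > 0 \<Longrightarrow> \<exists>h L. (h \<longlongrightarrow> L) F \<and> (\<forall>x. dist (g x) (h x) \<le> e)"
  shows "\<exists>L. (g \<longlongrightarrow> L) F"
proof -
  have cauchy: "cauchy_filter (filtermap g F)"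
    unfolding cauchy_filter_metric_filtermap
  proof (intro allI impI)
    fix e :: real assume e: "e > 0"
    then obtain h L where h: "(h \<longlongrightarrow> L) F" "\<And>x. dist (g x) (h x) \<le> e / 4"
      using approx[of "e / 4"] by auto
    have "\<forall>\<^sub>F x in F. dist (h x) L < e / 4" using tendstoD[OF h(1), of "e / 4"] e by simp
    moreover have "dist (g x) (g y) < e" if "dist (h x) L < e / 4" "dist (h y) L < e / 4" for x y
      using that h(2)[of x] h(2)[of y] dist_triangle2[of "g x" "g y" L]
        dist_triangle[of "g x" L "h x"] dist_triangle[of "g y" L "h y"] by linarith
    ultimately show "\<exists>P. eventually P F \<and> (\<forall>x y. P x \<and> P y \<longrightarrow> dist (g x) (g y) < e)" by blast
  qed
  have "filtermap g F \<noteq> bot" using F by (simp add: filtermap_bot_iff)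
  then obtain L where "filtermap g F \<le> nhds L"
    using cauchy_filter_complete_converges[OF cauchy complete_UNIV] by auto
  then show ?thesis unfolding filterlim_def by blast
qed

lemma has_limits_pm_uniform_approx:
  assumes "\<And>e. e > 0 \<Longrightarrow> \<exists>h. has_limits_pm h \<and> (\<forall>k. cmod (g k - h k) \<le> e)"
  shows "has_limits_pm g"
  unfolding has_limits_pm_def
  using tendsto_of_uniform_approx[of at_top g] tendsto_of_uniform_approx[of at_bot g] assms
  by (fastforce simp: has_limits_pm_def dist_norm)

section \<open>Weighted shifts\<close>

definition wshift :: "int \<Rightarrow> (int \<Rightarrow> complex) \<Rightarrow> mat" where
  "wshift m w = (\<lambda>i j. if i = j + m then w j else 0)"

lemma mmult_Upow_diagop: "mmult (Upow n) (diagop b) = wshift n b"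
  unfolding mmult_def Upow_def diagop_def wshift_def
  by (rule ext, rule ext, subst infsum_single[where a="i - n" for i]) auto

lemma mmult_wshift_left: "mmult (wshift m w) X = (\<lambda>i k. w (i - m) * X (i - m) k)"
  unfolding mmult_def wshift_def
  by (rule ext, rule ext, subst infsum_single[where a="i - m" for i]) auto

lemma mmult_wshift_right: "mmult X (wshift m w) = (\<lambda>i k. X i (k + m) * w k)"
  unfolding mmult_def wshift_def
  by (rule ext, rule ext, subst infsum_single[where a="k + m" for k]) auto

lemma mmult_diagop_left: "mmult (diagop a) X = (\<lambda>i k. a i * X i k)"
  unfolding mmult_def diagop_def
  by (rule ext, rule ext, subst infsum_single[where a=i for i]) auto

lemma mmult_diagop_right: "mmult X (diagop a) = (\<lambda>i k. X i k * a k)"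
  unfolding mmult_def diagop_def
  by (rule ext, rule ext, subst infsum_single[where a=k for k]) auto

lemma commutator_wshift:
  "commutator (wshift n b) X = (\<lambda>i k. b (i - n) * X (i - n) k - X i (k + n) * b k)"
  unfolding commutator_def mdiff_def mmult_wshift_left mmult_wshift_right ..

lemma mapply_wshift: "mapply (wshift m w) x = (\<lambda>i. w (i - m) * x (i - m))"
  unfolding mapply_def wshift_def
  by (rule ext, subst infsum_single[where a="i - m" for i]) auto

lemma op_bound_wshift:
  assumes K: "\<And>j. cmod (w j) \<le> K"
  shows "op_bound (wshift m w) K"
  unfolding op_bound_def
proof (intro ballI conjI allI)
  fix x assume x: "x \<in> l2"
  have K0: "0 \<le> K" using K[of 0] norm_ge_zero order_trans by blast
  show "(\<lambda>j. wshift m w i j * x j) summable_on UNIV" for i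
    using has_sum_single[of "i - m" "\<lambda>j. wshift m w i j * x j"]
    by (auto simp: wshift_def summable_on_def)
  have "((\<lambda>i. (cmod (x (i - m)))^2) has_sum (l2norm x)^2) UNIV
      \<longleftrightarrow> ((\<lambda>k. (cmod (x k))^2) has_sum (l2norm x)^2) UNIV"
    by (rule has_sum_reindex_bij_witness[where i="\<lambda>k. k + m" and j="\<lambda>i. i - m"]) auto
  then have "((\<lambda>i. (cmod (x (i - m)))^2) has_sum (l2norm x)^2) UNIV"
    using has_sum_power2_l2norm[OF x] by simp
  then have h2: "((\<lambda>i. K^2 * (cmod (x (i - m)))^2) has_sum (K * l2norm x)^2) UNIV"
    using has_sum_cmult_right by (fastforce simp: power_mult_distrib)
  have pw: "(cmod (w (i - m) * x (i - m)))^2 \<le> K^2 * (cmod (x (i - m)))^2" for i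
  proof -
    have "cmod (w (i - m) * x (i - m)) \<le> K * cmod (x (i - m))"
      unfolding norm_mult by (rule mult_right_mono[OF K]) simp
    then show ?thesis
      using power_mono[of _ _ 2] by (fastforce simp: power_mult_distrib)
  qed
  have s: "(\<lambda>i. (cmod (w (i - m) * x (i - m)))^2) summable_on UNIV"
    by (rule summable_on_comparison_test[OF has_sum_imp_summable[OF h2]]) (use pw in auto)
  then show "mapply (wshift m w) x \<in> l2" unfolding mapply_wshift l2_def by simp
  have "(l2norm (mapply (wshift m w) x))^2 \<le> (K * l2norm x)^2"
    unfolding mapply_wshift power2_l2norm
    by (rule has_sum_mono[OF has_sum_infsum[OF s] h2]) (use pw in auto)
  then show "l2norm (mapply (wshift m w) x) \<le> K * l2norm x"
    by (rule power2_le_imp_le) (simp add: K0 l2norm_nonneg)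
qed

section \<open>The C*-algebra consists of norm limits of band matrices\<close>

definition banded :: "mat set" where
  "banded = {P. \<exists>N. finite N \<and> (\<forall>i j. i - j \<notin> N \<longrightarrow> P i j = 0)
     \<and> (\<forall>m. has_limits_pm (\<lambda>k. P (k + m) k))}"

lemma bandedI:
  "finite N \<Longrightarrow> (\<And>i j. i - j \<notin> N \<Longrightarrow> P i j = 0) \<Longrightarrow> (\<And>m. has_limits_pm (\<lambda>k. P (k + m) k))
    \<Longrightarrow> P \<in> banded"
  unfolding banded_def by blast

lemma bandedE:
  assumes "P \<in> banded"
  obtains N where "finite N" "\<And>i j. i - j \<notin> N \<Longrightarrow> P i j = 0" "\<And>m. has_limits_pm (\<lambda>k. P (k + m) k)"
  using assms unfolding banded_def by blast

lemma banded_diagonal: "P \<in> banded \<Longrightarrow> has_limits_pm (\<lambda>k. P (k + m) k)"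
  unfolding banded_def by blast

lemma banded_eq_sum_wshift:
  assumes "finite N" "\<And>i j. i - j \<notin> N \<Longrightarrow> P i j = 0"
  shows "P = (\<lambda>i j. \<Sum>m\<in>N. wshift m (\<lambda>k. P (k + m) k) i j)"
proof (intro ext)
  fix i j
  have "wshift m (\<lambda>k. P (k + m) k) i j = (if m = i - j then P i j else 0)" for m
    by (auto simp: wshift_def)
  then show "P i j = (\<Sum>m\<in>N. wshift m (\<lambda>k. P (k + m) k) i j)"
    using assms by simp
qed

lemma op_bound_banded:
  assumes "P \<in> banded" obtains K where "op_bound P K"
proof -
  obtain N where N: "finite N" "\<And>i j. i - j \<notin> N \<Longrightarrow> P i j = 0" "\<And>m. has_limits_pm (\<lambda>k. P (k + m) k)"
    by (rule bandedE[OF assms]) blast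
  have "\<forall>m. \<exists>K. \<forall>k. cmod (P (k + m) k) \<le> K" using has_limits_pm_bounded[OF N(3)] by metis
  then obtain K where K: "\<And>m k. cmod (P (k + m) k) \<le> K m" by metis
  have "op_bound (\<lambda>i j. \<Sum>m\<in>N. wshift m (\<lambda>k. P (k + m) k) i j) (\<Sum>m\<in>N. K m)"
    by (rule op_bound_sum[OF N(1)]) (auto intro!: op_bound_wshift K)
  then have "op_bound P (\<Sum>m\<in>N. K m)" by (subst banded_eq_sum_wshift[OF N(1,2)])
  then show thesis by (rule that)
qed

lemma Upow_banded: "Upow 1 \<in> banded"
  by (rule bandedI[of "{1}"]) (auto simp: Upow_def has_limits_pm_const)

lemma diagop_banded:
  assumes "has_limits_pm a" shows "diagop a \<in> banded"
proof (rule bandedI[of "{0}"])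
  show "has_limits_pm (\<lambda>k. diagop a (k + m) k)" for m
    using assms has_limits_pm_const[of 0] by (cases "m = 0") (simp_all add: diagop_def)
qed (auto simp: diagop_def)

lemma banded_madd:
  assumes "P \<in> banded" "Q \<in> banded" shows "madd P Q \<in> banded"
proof -
  obtain N1 where N1: "finite N1" "\<And>i j. i - j \<notin> N1 \<Longrightarrow> P i j = 0" "\<And>m. has_limits_pm (\<lambda>k. P (k + m) k)"
    by (rule bandedE[OF assms(1)]) blast
  obtain N2 where N2: "finite N2" "\<And>i j. i - j \<notin> N2 \<Longrightarrow> Q i j = 0" "\<And>m. has_limits_pm (\<lambda>k. Q (k + m) k)"
    by (rule bandedE[OF assms(2)]) blast
  show ?thesis
    by (rule bandedI[of "N1 \<union> N2"]) (use N1 N2 in \<open>auto simp: madd_def intro: has_limits_pm_add\<close>)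
qed

lemma banded_mscale:
  assumes "P \<in> banded" shows "mscale c P \<in> banded"
proof -
  obtain N where N: "finite N" "\<And>i j. i - j \<notin> N \<Longrightarrow> P i j = 0" "\<And>m. has_limits_pm (\<lambda>k. P (k + m) k)"
    by (rule bandedE[OF assms]) blast
  show ?thesis
    by (rule bandedI[OF N(1)])
      (simp_all add: mscale_def N(2) has_limits_pm_mult[OF has_limits_pm_const N(3)])
qed

lemma banded_madj:
  assumes "P \<in> banded" shows "madj P \<in> banded"
proof -
  obtain N where N: "finite N" "\<And>i j. i - j \<notin> N \<Longrightarrow> P i j = 0" "\<And>m. has_limits_pm (\<lambda>k. P (k + m) k)"
    by (rule bandedE[OF assms]) blast
  show ?thesis
  proof (rule bandedI[of "uminus ` N"])
    show "madj P i j = 0" if "i - j \<notin> uminus ` N" for i j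
    proof -
      have "j - i \<notin> N" using that by (metis minus_diff_eq rev_image_eqI)
      then show ?thesis using N(2) by (simp add: madj_def)
    qed
    show "has_limits_pm (\<lambda>k. madj P (k + m) k)" for m
      using has_limits_pm_cnj[OF has_limits_pm_shift[OF N(3)[of "- m"], of m]] by (simp add: madj_def)
  qed (use N(1) in simp)
qed

lemma mmult_entry_banded_right:
  assumes "finite N" "\<And>i j. i - j \<notin> N \<Longrightarrow> Q i j = 0"
  shows "mmult P Q i k = (\<Sum>s\<in>N. P i (k + s) * Q (k + s) k)"
proof -
  have "mmult P Q i k = infsum (\<lambda>j. P i j * Q j k) ((\<lambda>s. k + s) ` N)"
    unfolding mmult_def by (rule infsum_cong_neutral) (use assms(2) in force)+
  also have "\<dots> = (\<Sum>s\<in>N. P i (k + s) * Q (k + s) k)"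
    using assms(1) by (simp add: sum.reindex)
  finally show ?thesis .
qed

lemma banded_mmult:
  assumes "P \<in> banded" "Q \<in> banded" shows "mmult P Q \<in> banded"
proof -
  obtain N1 where N1: "finite N1" "\<And>i j. i - j \<notin> N1 \<Longrightarrow> P i j = 0" "\<And>m. has_limits_pm (\<lambda>k. P (k + m) k)"
    by (rule bandedE[OF assms(1)]) blast
  obtain N2 where N2: "finite N2" "\<And>i j. i - j \<notin> N2 \<Longrightarrow> Q i j = 0" "\<And>m. has_limits_pm (\<lambda>k. Q (k + m) k)"
    by (rule bandedE[OF assms(2)]) blast
  have entry: "mmult P Q i k = (\<Sum>s\<in>N2. P i (k + s) * Q (k + s) k)" for i k
    by (rule mmult_entry_banded_right[OF N2(1,2)])
  show ?thesis
  proof (rule bandedI[of "(\<lambda>(a, b). a + b) ` (N1 \<times> N2)"])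
    show "finite ((\<lambda>(a, b). a + b) ` (N1 \<times> N2))" using N1(1) N2(1) by simp
    show "mmult P Q i j = 0" if "i - j \<notin> (\<lambda>(a, b). a + b) ` (N1 \<times> N2)" for i j
    proof -
      have "P i (j + s) = 0" if "s \<in> N2" for s
        using N1(2)[of i "j + s"] \<open>i - j \<notin> _\<close> \<open>s \<in> N2\<close> by (force simp: image_iff)
      then have "(\<Sum>s\<in>N2. P i (j + s) * Q (j + s) j) = 0" by simp
      then show ?thesis using entry[of i j] by simp
    qed
    show "has_limits_pm (\<lambda>k. mmult P Q (k + m) k)" for m
      unfolding entry
    proof (rule has_limits_pm_sum[OF N2(1)])
      fix s
      have "has_limits_pm (\<lambda>k. P (k + m) (k + s))"
        using has_limits_pm_shift[OF N1(3)[of "m - s"], of s] by (simp add: algebra_simps)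
      then show "has_limits_pm (\<lambda>k. P (k + m) (k + s) * Q (k + s) k)"
        by (rule has_limits_pm_mult) (use N2(3) in simp)
    qed
  qed
qed

definition band_closure :: "mat set" where
  "band_closure = {M. bounded_op M \<and> (\<forall>e>0. \<exists>P\<in>banded. op_bound (mdiff M P) e)}"

lemma band_closureD: "M \<in> band_closure \<Longrightarrow> e > 0 \<Longrightarrow> \<exists>P\<in>banded. op_bound (mdiff M P) e"
  unfolding band_closure_def by blast

lemma band_closure_bound: "M \<in> band_closure \<Longrightarrow> \<exists>c. op_bound M c"
  unfolding band_closure_def bounded_op_iff_op_bound by blast

lemma banded_in_band_closure:
  assumes "P \<in> banded" shows "P \<in> band_closure"
proof -
  have "mdiff P P = (\<lambda>i j. 0)" by (auto simp: mdiff_def)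
  then have "op_bound (mdiff P P) e" if "e > 0" for e
    using that op_bound_zero by simp
  then show ?thesis
    unfolding band_closure_def bounded_op_iff_op_bound
    using op_bound_banded[OF assms] assms by blast
qed

lemma band_closure_madd:
  assumes M: "M \<in> band_closure" and N: "N \<in> band_closure" shows "madd M N \<in> band_closure"
proof -
  have "\<exists>R\<in>banded. op_bound (mdiff (madd M N) R) e" if e: "e > 0" for e
  proof -
    obtain P where P: "P \<in> banded" "op_bound (mdiff M P) (e/2)"
      using band_closureD[OF M half_gt_zero[OF e]] by blast
    obtain Q where Q: "Q \<in> banded" "op_bound (mdiff N Q) (e/2)"
      using band_closureD[OF N half_gt_zero[OF e]] by blast
    have "mdiff (madd M N) (madd P Q) = madd (mdiff M P) (mdiff N Q)"
      by (auto simp: mdiff_def madd_def intro!: ext)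
    then have "op_bound (mdiff (madd M N) (madd P Q)) e"
      using op_bound_madd[OF P(2) Q(2)] by simp
    then show ?thesis using banded_madd[OF P(1) Q(1)] by auto
  qed
  moreover have "bounded_op (madd M N)"
    unfolding bounded_op_iff_op_bound
    using band_closure_bound[OF M] band_closure_bound[OF N] by (blast intro: op_bound_madd)
  ultimately show ?thesis unfolding band_closure_def by auto
qed

lemma band_closure_mscale:
  assumes M: "M \<in> band_closure" shows "mscale c M \<in> band_closure"
proof -
  have "\<exists>R\<in>banded. op_bound (mdiff (mscale c M) R) e" if e: "e > 0" for e
  proof -
    have e': "e / (cmod c + 1) > 0" using e norm_ge_zero[of c] by (intro divide_pos_pos) linarith+
    obtain P where P: "P \<in> banded" "op_bound (mdiff M P) (e / (cmod c + 1))"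
      using band_closureD[OF M e'] by blast
    have "mdiff (mscale c M) (mscale c P) = mscale c (mdiff M P)"
      by (auto simp: mdiff_def mscale_def algebra_simps)
    then have "op_bound (mdiff (mscale c M) (mscale c P)) (cmod c * (e / (cmod c + 1)))"
      using op_bound_mscale[OF P(2)] by simp
    moreover have "cmod c * (e / (cmod c + 1)) \<le> e"
      using e by (simp add: field_simps add_pos_nonneg)
    ultimately show ?thesis using banded_mscale[OF P(1)] op_bound_mono by blast
  qed
  moreover have "bounded_op (mscale c M)"
    unfolding bounded_op_iff_op_bound using band_closure_bound[OF M] by (blast intro: op_bound_mscale)
  ultimately show ?thesis unfolding band_closure_def by auto
qed

lemma band_closure_madj:
  assumes M: "M \<in> band_closure" shows "madj M \<in> band_closure"
proof -
  have "\<exists>R\<in>banded. op_bound (mdiff (madj M) R) e" if e: "e > 0" for e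
  proof -
    obtain P where P: "P \<in> banded" "op_bound (mdiff M P) e" using band_closureD[OF M e] by blast
    have "mdiff (madj M) (madj P) = madj (mdiff M P)" by (auto simp: madj_def mdiff_def)
    then show ?thesis
      using op_bound_madj[OF P(2)] banded_madj[OF P(1)] by (intro bexI[of _ "madj P"]) simp_all
  qed
  moreover have "bounded_op (madj M)"
    unfolding bounded_op_iff_op_bound using band_closure_bound[OF M] by (blast intro: op_bound_madj)
  ultimately show ?thesis unfolding band_closure_def by auto
qed

lemma mdiff_mmult_mmult:
  assumes "op_bound M a" "op_bound N b" "op_bound P c" "op_bound Q d"
  shows "mdiff (mmult M N) (mmult P Q) = madd (mmult M (mdiff N Q)) (mmult (mdiff M P) Q)"
proof (intro ext)
  fix i k
  have s: "(\<lambda>j. M i j * N j k) summable_on UNIV" "(\<lambda>j. M i j * Q j k) summable_on UNIV"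
    "(\<lambda>j. P i j * Q j k) summable_on UNIV"
    using op_boundD(1)[OF assms(1) op_bound_column(1)[OF assms(2)]]
      op_boundD(1)[OF assms(1) op_bound_column(1)[OF assms(4)]]
      op_boundD(1)[OF assms(3) op_bound_column(1)[OF assms(4)]] .
  have "infsum (\<lambda>j. M i j * (N j k - Q j k)) UNIV + infsum (\<lambda>j. (M i j - P i j) * Q j k) UNIV
      = infsum (\<lambda>j. M i j * N j k) UNIV - infsum (\<lambda>j. P i j * Q j k) UNIV"
    unfolding right_diff_distrib left_diff_distrib infsum_diff[OF s(1,2)] infsum_diff[OF s(2,3)]
    by simp
  then show "mdiff (mmult M N) (mmult P Q) i k = madd (mmult M (mdiff N Q)) (mmult (mdiff M P) Q) i k"
    by (simp add: mdiff_def madd_def mmult_def)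
qed

lemma band_closure_mmult:
  assumes M: "M \<in> band_closure" and N: "N \<in> band_closure" shows "mmult M N \<in> band_closure"
proof -
  obtain cM cN where cM: "op_bound M cM" and cN: "op_bound N cN"
    using band_closure_bound[OF M] band_closure_bound[OF N] by blast
  have cM0: "cM \<ge> 0" and cN0: "cN \<ge> 0" using op_bound_nonneg cM cN by auto
  have "\<exists>R\<in>banded. op_bound (mdiff (mmult M N) R) e" if e: "e > 0" for e
  proof -
    define d where "d = min 1 (e / (cM + cN + 2))"
    have d0: "d > 0" using e cM0 cN0 by (simp add: d_def)
    obtain P where P: "P \<in> banded" "op_bound (mdiff M P) d" using band_closureD[OF M d0] by blast
    obtain Q where Q: "Q \<in> banded" "op_bound (mdiff N Q) d" using band_closureD[OF N d0] by blast
    obtain cP where cP: "op_bound P cP" using op_bound_banded[OF P(1)] .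
    obtain cQ where cQ: "op_bound Q cQ" using op_bound_banded[OF Q(1)] .
    have "mdiff N (mdiff N Q) = Q" by (auto simp: mdiff_def)
    then have cQ': "op_bound Q (cN + d)" using op_bound_mdiff[OF cN Q(2)] by simp
    have "op_bound (madd (mmult M (mdiff N Q)) (mmult (mdiff M P) Q)) (cM * d + d * (cN + d))"
      by (rule op_bound_madd[OF op_bound_mmult[OF cM Q(2)] op_bound_mmult[OF P(2) cQ']])
    moreover have "cM * d + d * (cN + d) \<le> e"
    proof -
      have "cM * d + d * (cN + d) = d * (cM + cN + d)" by (simp add: algebra_simps)
      also have "\<dots> \<le> d * (cM + cN + 2)" using d0 by (intro mult_left_mono) (auto simp: d_def)
      also have "\<dots> \<le> e"
        using cM0 cN0 mult_right_mono[of d "e / (cM + cN + 2)" "cM + cN + 2"] by (simp add: d_def)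
      finally show ?thesis .
    qed
    ultimately have "op_bound (mdiff (mmult M N) (mmult P Q)) e"
      unfolding mdiff_mmult_mmult[OF cM cN cP cQ] by (rule op_bound_mono)
    then show ?thesis using banded_mmult[OF P(1) Q(1)] by auto
  qed
  moreover have "bounded_op (mmult M N)"
    using op_bound_mmult[OF cM cN] by (auto simp: bounded_op_iff_op_bound)
  ultimately show ?thesis unfolding band_closure_def by auto
qed

lemma band_closure_limit:
  assumes f: "\<And>m. f m \<in> band_closure" and M: "bounded_op M"
    and lim: "(\<lambda>m. opnorm (mdiff (f m) M)) \<longlonglongrightarrow> 0"
  shows "M \<in> band_closure"
proof -
  have "\<exists>P\<in>banded. op_bound (mdiff M P) e" if e: "e > 0" for e
  proof -
    obtain m where "\<forall>n\<ge>m. \<bar>opnorm (mdiff (f n) M)\<bar> < e/2"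
      using LIMSEQ_D[OF lim, of "e/2"] e by auto
    then have m: "opnorm (mdiff (f m) M) < e/2" by auto
    obtain c1 where "op_bound (f m) c1" using band_closure_bound[OF f] by blast
    moreover obtain c2 where "op_bound M c2" using M bounded_op_iff_op_bound by blast
    ultimately have "bounded_op (mdiff (f m) M)"
      using op_bound_mdiff bounded_op_iff_op_bound by blast
    then have "op_bound (mscale (-1) (mdiff (f m) M)) (opnorm (mdiff (f m) M))"
      using op_bound_mscale[OF op_bound_opnorm, of _ "-1"] by simp
    moreover have "mscale (-1) (mdiff (f m) M) = mdiff M (f m)" by (auto simp: mdiff_def mscale_def)
    ultimately have n1: "op_bound (mdiff M (f m)) (opnorm (mdiff (f m) M))" by simp
    obtain P where P: "P \<in> banded" "op_bound (mdiff (f m) P) (e/2)"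
      using band_closureD[OF f half_gt_zero[OF e]] by blast
    have "mdiff M P = madd (mdiff M (f m)) (mdiff (f m) P)" by (auto simp: mdiff_def madd_def)
    then have "op_bound (mdiff M P) (opnorm (mdiff (f m) M) + e/2)"
      using op_bound_madd[OF n1 P(2)] by simp
    moreover have "opnorm (mdiff (f m) M) + e/2 \<le> e" using m by simp
    ultimately show ?thesis using P(1) op_bound_mono by blast
  qed
  then show ?thesis using M unfolding band_closure_def by auto
qed

lemma Cstar_A_subset_band_closure: "Cstar_A \<subseteq> band_closure"
  unfolding Cstar_A_def
proof (rule Inter_lower, intro CollectI conjI)
  show "band_closure \<subseteq> {M. bounded_op M}" unfolding band_closure_def by auto
  show "Upow 1 \<in> band_closure" by (rule banded_in_band_closure[OF Upow_banded])
  show "\<forall>a. has_limits_pm a \<longrightarrow> diagop a \<in> band_closure"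
    using banded_in_band_closure diagop_banded by blast
  show "\<forall>M\<in>band_closure. \<forall>N\<in>band_closure. madd M N \<in> band_closure \<and> mmult M N \<in> band_closure"
    using band_closure_madd band_closure_mmult by blast
  show "\<forall>c. \<forall>M\<in>band_closure. mscale c M \<in> band_closure" using band_closure_mscale by blast
  show "\<forall>M\<in>band_closure. madj M \<in> band_closure" using band_closure_madj by blast
  show "\<forall>f M. (\<forall>m. f m \<in> band_closure) \<and> bounded_op M \<and> (\<lambda>m. opnorm (mdiff (f m) M)) \<longlonglongrightarrow> 0
      \<longrightarrow> M \<in> band_closure"
    using band_closure_limit by blast
qed

lemma Cstar_A_diagonal_limits:
  assumes "M \<in> Cstar_A" shows "has_limits_pm (\<lambda>k. M (k + m) k)"
proof (rule has_limits_pm_uniform_approx)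
  fix e :: real assume "e > 0"
  then obtain P where P: "P \<in> banded" "op_bound (mdiff M P) e"
    using assms Cstar_A_subset_band_closure band_closureD by blast
  have "cmod (M (k + m) k - P (k + m) k) \<le> e" for k
    using op_bound_entry[OF P(2)] by (simp add: mdiff_def)
  then show "\<exists>h. has_limits_pm h \<and> (\<forall>k. cmod (M (k + m) k - h k) \<le> e)"
    using banded_diagonal[OF P(1)] by blast
qed

lemma smooth_A_eq:
  "smooth_A = {M. \<exists>N a. finite N \<and> (\<forall>n. eventually_const (a n))
     \<and> M = (\<lambda>i j. \<Sum>n\<in>N. wshift n (a n) i j)}"
  unfolding smooth_A_def mmult_Upow_diagop ..

lemma eventually_const_const: "eventually_const (\<lambda>_. c)"
  unfolding eventually_const_def by auto

lemma eventually_const_unit_vec: "eventually_const (unit_vec k)"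
  unfolding eventually_const_def unit_vec_def by (rule exI[of _ "\<bar>k\<bar> + 1"]) auto

lemma sum_wshift_in_smooth_A:
  "finite F \<Longrightarrow> (\<And>m. eventually_const (a m)) \<Longrightarrow> (\<lambda>i j. \<Sum>m\<in>F. wshift m (a m) i j) \<in> smooth_A"
  unfolding smooth_A_eq by blast

lemma wshift_in_smooth_A: "eventually_const w \<Longrightarrow> wshift m w \<in> smooth_A"
  using sum_wshift_in_smooth_A[of "{m}" "\<lambda>_. w"] by simp

lemma Upow_eq_wshift: "Upow m = wshift m (\<lambda>_. 1)"
  by (simp add: Upow_def wshift_def)

lemma Upow_in_smooth_A: "Upow m \<in> smooth_A"
  unfolding Upow_eq_wshift by (rule wshift_in_smooth_A[OF eventually_const_const])

lemma zero_in_smooth_A: "(\<lambda>i j. 0) \<in> smooth_A"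
  using sum_wshift_in_smooth_A[of "{}" "\<lambda>_. \<lambda>_. 0"] eventually_const_const by simp

lemma rho_entry:
  "rho \<phi> X i k = exp (\<i> * of_real \<phi> * of_int i) * X i k * exp (- \<i> * of_real \<phi> * of_int k)"
  unfolding rho_def mmult_diagop_left mmult_diagop_right ..

lemma rho_wshift: "rho \<phi> (wshift m w) = mscale (exp (\<i> * of_real \<phi> * of_int m)) (wshift m w)"
proof (intro ext)
  fix i k
  have "exp (\<i> * of_real \<phi> * of_int (k + m)) * exp (- \<i> * of_real \<phi> * of_int k)
      = exp (\<i> * of_real \<phi> * of_int m)"
    unfolding mult_exp_exp by (simp add: algebra_simps)
  then show "rho \<phi> (wshift m w) i k = mscale (exp (\<i> * of_real \<phi> * of_int m)) (wshift m w) i k"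
    unfolding rho_entry mscale_def wshift_def by (auto simp: algebra_simps)
qed

lemma exp_pi_div_abs: "t \<noteq> 0 \<Longrightarrow> exp (\<i> * of_real (pi / \<bar>of_int t\<bar>) * of_int t) = -1"
  by (cases "t > 0") (simp_all add: exp_minus)

section \<open>Covariant derivations\<close>

definition antidiff :: "(int \<Rightarrow> complex) \<Rightarrow> int \<Rightarrow> complex" where
  "antidiff g k = (if 0 \<le> k then (\<Sum>j\<in>{0..<k}. g j) else - (\<Sum>j\<in>{k..<0}. g j))"

lemma antidiff_step: "antidiff g (k + 1) - antidiff g k = g k"
proof (cases "0 \<le> k")
  case True
  then have "{0..<k + 1} = insert k {0..<k}" by auto
  then show ?thesis using True by (simp add: antidiff_def)
next
  case False
  then have "{k..<0} = insert k {k + 1..<0}" by auto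
  then show ?thesis using False by (simp add: antidiff_def)
qed

lemma eq_increments_imp_const_diff:
  fixes f g :: "int \<Rightarrow> complex"
  assumes "\<And>k. f (k + 1) - f k = g (k + 1) - g k"
  shows "\<exists>c. \<forall>k. f k = g k + c"
proof -
  have step: "f (k + 1) - g (k + 1) = f k - g k" for k
    using assms[of k] by (simp add: algebra_simps)
  have "f k - g k = f 0 - g 0" for k
  proof (induction k rule: int_induct[where k=0])
    case (step1 i) then show ?case using step[of i] by simp
  next
    case (step2 i) then show ?case using step[of "i - 1"] by simp
  qed simp
  then show ?thesis by (metis add.commute diff_add_cancel)
qed

lemma commutator_wshift_determines_coeff:
  assumes eq: "\<forall>a\<in>smooth_A. commutator (wshift n \<beta>1) a = commutator (wshift n \<beta>2) a"
  shows "n \<noteq> 0 \<Longrightarrow> \<beta>1 = \<beta>2" and "n = 0 \<Longrightarrow> \<exists>c. \<forall>k. \<beta>1 k = \<beta>2 k + c"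
proof -
  assume "n \<noteq> 0"
  show "\<beta>1 = \<beta>2"
  proof
    fix k
    have "commutator (wshift n \<beta>1) (wshift 0 (unit_vec k)) (k + n) k
        = commutator (wshift n \<beta>2) (wshift 0 (unit_vec k)) (k + n) k"
      using eq wshift_in_smooth_A[OF eventually_const_unit_vec] by metis
    then show "\<beta>1 k = \<beta>2 k"
      using \<open>n \<noteq> 0\<close> unfolding commutator_wshift by (simp add: wshift_def unit_vec_def)
  qed
next
  assume "n = 0"
  have "commutator (wshift n \<beta>1) (Upow 1) (k + 1) k = commutator (wshift n \<beta>2) (Upow 1) (k + 1) k" for k
    using eq Upow_in_smooth_A by metis
  then show "\<exists>c. \<forall>k. \<beta>1 k = \<beta>2 k + c"
    using \<open>n = 0\<close> unfolding commutator_wshift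
    by (intro eq_increments_imp_const_diff) (simp add: Upow_def wshift_def)
qed

locale covariant_derivation =
  fixes d :: "mat \<Rightarrow> mat" and n :: int
  assumes derivation: "is_derivation d" and covariant: "n_covariant n d"
begin

lemma d_madd: "a \<in> smooth_A \<Longrightarrow> b \<in> smooth_A \<Longrightarrow> d (madd a b) = madd (d a) (d b)"
  using derivation unfolding is_derivation_def by blast

lemma d_mscale: "a \<in> smooth_A \<Longrightarrow> d (mscale c a) = mscale c (d a)"
  using derivation unfolding is_derivation_def by blast

lemma d_mmult: "a \<in> smooth_A \<Longrightarrow> b \<in> smooth_A \<Longrightarrow> d (mmult a b) = madd (mmult a (d b)) (mmult (d a) b)"
  using derivation unfolding is_derivation_def by blast

lemma d_in_Cstar_A: "a \<in> smooth_A \<Longrightarrow> d a \<in> Cstar_A"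
  using derivation unfolding is_derivation_def by blast

lemma d_zero: "d (\<lambda>i j. 0) = (\<lambda>i j. 0)"
  using d_mscale[OF zero_in_smooth_A, of 0] by (simp add: mscale_def)

text \<open>With \<open>t = i - k - n - s\<close>, the test rotation \<open>\<phi> = \<pi>/|t|\<close> separates the phases
  \<open>e^(i\<phi>s)\<close> and \<open>e^(i\<phi>(s+t))\<close> that covariance attaches to the two sides at entry \<open>(i, k)\<close>.\<close>

lemma d_homogeneous:
  assumes X: "X \<in> smooth_A" and hom: "\<And>\<phi>. rho \<phi> X = mscale (exp (\<i> * of_real \<phi> * of_int s)) X"
    and off: "i - k \<noteq> n + s"
  shows "d X i k = 0"
proof -
  define t where "t = i - k - n - s"
  have t0: "t \<noteq> 0" using off by (simp add: t_def)
  define \<phi> where "\<phi> = pi / \<bar>of_int t\<bar>"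
  have "\<phi> \<le> pi" using t0 by (simp add: \<phi>_def divide_le_eq)
  then have "\<phi> < 2 * pi" using pi_gt_zero by linarith
  then have \<phi>: "\<phi> \<in> {0..<2*pi}" by (simp add: \<phi>_def)
  have cov: "d (rho \<phi> X) = mscale (exp (- \<i> * of_int n * of_real \<phi>)) (rho \<phi> (d X))"
    using covariant X \<phi> unfolding n_covariant_def by blast
  have "d (rho \<phi> X) = mscale (exp (\<i> * of_real \<phi> * of_int s)) (d X)"
    unfolding hom by (rule d_mscale[OF X])
  then have "exp (\<i> * of_real \<phi> * of_int s) * d X i k
      = exp (- \<i> * of_int n * of_real \<phi>) * (exp (\<i> * of_real \<phi> * of_int i) * d X i k
          * exp (- \<i> * of_real \<phi> * of_int k))"
    using cov unfolding mscale_def rho_entry by metis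
  also have "\<dots> = exp (\<i> * of_real \<phi> * of_int s) * exp (\<i> * of_real \<phi> * of_int t) * d X i k"
  proof -
    have "exp (- \<i> * of_int n * of_real \<phi>)
          * (exp (\<i> * of_real \<phi> * of_int i) * exp (- \<i> * of_real \<phi> * of_int k))
        = exp (\<i> * of_real \<phi> * of_int s) * exp (\<i> * of_real \<phi> * of_int t)"
      unfolding mult_exp_exp t_def by (simp add: algebra_simps)
    then show ?thesis by (simp add: algebra_simps)
  qed
  also have "\<dots> = - exp (\<i> * of_real \<phi> * of_int s) * d X i k"
    using exp_pi_div_abs[OF t0] by (simp add: \<phi>_def)
  finally show ?thesis by simp
qed

lemma d_wshift_off_diagonal: "eventually_const w \<Longrightarrow> i - k \<noteq> n + m \<Longrightarrow> d (wshift m w) i k = 0"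
  using d_homogeneous[OF wshift_in_smooth_A rho_wshift] .

definition diag_coeff :: "int \<Rightarrow> complex" where
  "diag_coeff k = d (wshift 0 (unit_vec k)) (k + n) k"

definition shift_coeff :: "int \<Rightarrow> complex" where
  "shift_coeff k = d (Upow 1) (k + n + 1) k"

text \<open>For \<open>n = 0\<close> the diagonal operators are killed by \<open>d\<close>, so \<open>\<beta>\<close> can only be recovered,
  up to a constant, from its increments \<open>shift_coeff\<close>.\<close>

definition beta :: "int \<Rightarrow> complex" where
  "beta = (if n = 0 then antidiff shift_coeff else diag_coeff)"

lemma d_diagonal:
  assumes a: "eventually_const a"
  shows "d (wshift 0 a) = wshift n (\<lambda>k. diag_coeff k * (a k - a (k + n)))"
proof (intro ext)
  fix i l
  show "d (wshift 0 a) i l = wshift n (\<lambda>k. diag_coeff k * (a k - a (k + n))) i l"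
  proof (cases "i = l + n")
    case False
    then show ?thesis using d_wshift_off_diagonal[OF a, of i l 0] by (simp add: wshift_def)
  next
    case True
    have "mmult (wshift 0 a) (wshift 0 (unit_vec l)) = mscale (a l) (wshift 0 (unit_vec l))"
      unfolding mmult_wshift_left by (auto simp: wshift_def mscale_def unit_vec_def intro!: ext)
    then have "mscale (a l) (d (wshift 0 (unit_vec l)))
        = madd (mmult (wshift 0 a) (d (wshift 0 (unit_vec l))))
            (mmult (d (wshift 0 a)) (wshift 0 (unit_vec l)))"
      using d_mmult d_mscale wshift_in_smooth_A a eventually_const_unit_vec by metis
    then have "a l * diag_coeff l = a (l + n) * diag_coeff l + d (wshift 0 a) (l + n) l"
      unfolding mscale_def madd_def mmult_wshift_left mmult_wshift_right
      by (drule_tac fun_cong[where x="l + n"], drule_tac fun_cong[where x=l])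
        (simp add: wshift_def unit_vec_def diag_coeff_def)
    then show ?thesis using True by (simp add: wshift_def algebra_simps)
  qed
qed

lemma d_U: "d (Upow 1) = wshift (n + 1) shift_coeff"
proof (intro ext)
  fix i l
  show "d (Upow 1) i l = wshift (n + 1) shift_coeff i l"
    using d_wshift_off_diagonal[OF eventually_const_const, of i l 1]
    by (cases "i = l + (n + 1)") (simp_all add: Upow_eq_wshift wshift_def shift_coeff_def algebra_simps)
qed

text \<open>Apply \<open>d\<close> to both sides of \<open>U P_k = P_(k+1) U\<close>, where \<open>P_k = wshift 0 (unit_vec k)\<close>
  is the projection onto \<open>E_k\<close>.\<close>

lemma shift_coeff_eq_diff:
  assumes "n \<noteq> 0" shows "shift_coeff k = diag_coeff (k + 1) - diag_coeff k"
proof -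
  have "mmult (Upow 1) (wshift 0 (unit_vec k)) = mmult (wshift 0 (unit_vec (k + 1))) (Upow 1)"
    unfolding Upow_eq_wshift mmult_wshift_left mmult_wshift_right
    by (auto simp: wshift_def unit_vec_def intro!: ext)
  then have "madd (mmult (Upow 1) (d (wshift 0 (unit_vec k)))) (mmult (d (Upow 1)) (wshift 0 (unit_vec k)))
      = madd (mmult (wshift 0 (unit_vec (k + 1))) (d (Upow 1)))
          (mmult (d (wshift 0 (unit_vec (k + 1)))) (Upow 1))"
    using d_mmult Upow_in_smooth_A wshift_in_smooth_A eventually_const_unit_vec by metis
  then have "diag_coeff k + shift_coeff k = diag_coeff (k + 1)"
    using assms unfolding madd_def d_U unfolding Upow_eq_wshift mmult_wshift_left mmult_wshift_right
    by (drule_tac fun_cong[where x="k + n + 1"], drule_tac fun_cong[where x=k])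
      (simp add: wshift_def unit_vec_def diag_coeff_def algebra_simps)
  then show ?thesis by (simp add: algebra_simps)
qed

lemma shift_coeff_eq_beta_diff: "shift_coeff k = beta (k + 1) - beta k"
  using antidiff_step shift_coeff_eq_diff by (simp add: beta_def)

lemma d_Upow_succ:
  "d (Upow (m + 1)) i l = wshift (n + 1) shift_coeff (i - m) l + d (Upow m) i (l + 1)"
proof -
  have "Upow (m + 1) = mmult (Upow m) (Upow 1)"
    unfolding Upow_eq_wshift mmult_wshift_right by (auto simp: wshift_def intro!: ext)
  then have "d (Upow (m + 1)) = madd (mmult (Upow m) (d (Upow 1))) (mmult (d (Upow m)) (Upow 1))"
    using d_mmult Upow_in_smooth_A by metis
  from this[THEN fun_cong[where x=i], THEN fun_cong[where x=l]] show ?thesis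
    unfolding madd_def d_U unfolding Upow_eq_wshift mmult_wshift_left mmult_wshift_right
    by (simp add: wshift_def)
qed

lemma d_Upow: "d (Upow m) = wshift (m + n) (\<lambda>k. beta (k + m) - beta k)"
proof -
  define D where "D m = d (Upow m)" for m
  have succ: "D (m + 1) i l = wshift (n + 1) shift_coeff (i - m) l + D m i (l + 1)" for m i l
    unfolding D_def by (rule d_Upow_succ)
  have "D m i l = wshift (m + n) (\<lambda>k. beta (k + m) - beta k) i l" for i l
  proof (induction m arbitrary: l rule: int_induct[where k=0])
    case base
    show ?case
      unfolding D_def Upow_eq_wshift d_diagonal[OF eventually_const_const] by (simp add: wshift_def)
  next
    case (step1 m)
    show ?case
      unfolding succ step1.IH using shift_coeff_eq_beta_diff[of l]
      by (simp add: wshift_def algebra_simps)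
  next
    case (step2 m)
    show ?case
      using succ[of "m - 1" i "l - 1"] step2.IH[of "l - 1"] shift_coeff_eq_beta_diff[of "l - 1"]
      by (simp add: wshift_def algebra_simps split: if_splits)
  qed
  then show ?thesis unfolding D_def by blast
qed

lemma d_wshift:
  assumes a: "eventually_const a"
  shows "d (wshift m a) = commutator (wshift n beta) (wshift m a)"
proof -
  have "wshift m a = mmult (Upow m) (wshift 0 a)"
    unfolding Upow_eq_wshift mmult_wshift_right by (auto simp: wshift_def intro!: ext)
  then have "d (wshift m a)
      = madd (mmult (Upow m) (d (wshift 0 a))) (mmult (d (Upow m)) (wshift 0 a))"
    using d_mmult Upow_in_smooth_A wshift_in_smooth_A a by metis
  also have "\<dots> = commutator (wshift n beta) (wshift m a)"
    unfolding d_diagonal[OF a] d_Upow commutator_wshift madd_def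
    unfolding Upow_eq_wshift mmult_wshift_left mmult_wshift_right
    by (auto simp: wshift_def beta_def algebra_simps intro!: ext)
  finally show ?thesis .
qed

lemma d_eq_commutator:
  assumes "M \<in> smooth_A" shows "d M = commutator (mmult (Upow n) (diagop beta)) M"
proof -
  obtain N a where N: "finite N" "\<And>m. eventually_const (a m)" "M = (\<lambda>i j. \<Sum>m\<in>N. wshift m (a m) i j)"
    using assms unfolding smooth_A_eq by blast
  have "d (\<lambda>i j. \<Sum>m\<in>F. wshift m (a m) i j)
      = commutator (wshift n beta) (\<lambda>i j. \<Sum>m\<in>F. wshift m (a m) i j)" if "finite F" for F
    using that
  proof (induction F rule: finite_induct)
    case empty
    show ?case using d_zero by (simp add: commutator_wshift)
  next
    case (insert x F)
    have eq: "(\<lambda>i j. \<Sum>m\<in>insert x F. wshift m (a m) i j)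
        = madd (wshift x (a x)) (\<lambda>i j. \<Sum>m\<in>F. wshift m (a m) i j)"
      using insert(1,2) by (auto simp: madd_def)
    have "d (\<lambda>i j. \<Sum>m\<in>insert x F. wshift m (a m) i j)
        = madd (d (wshift x (a x))) (d (\<lambda>i j. \<Sum>m\<in>F. wshift m (a m) i j))"
      unfolding eq
      by (rule d_madd[OF wshift_in_smooth_A sum_wshift_in_smooth_A]) (use N(2) insert(1) in auto)
    then show ?case
      unfolding insert(3) d_wshift[OF N(2)] eq commutator_wshift by (auto simp: madd_def algebra_simps)
  qed
  then show ?thesis using N by (simp add: mmult_Upow_diagop)
qed

lemma convergent_increments_beta: "convergent_increments beta"
proof -
  have "has_limits_pm (\<lambda>k. d (Upow 1) (k + (n + 1)) k)"
    using Cstar_A_diagonal_limits d_in_Cstar_A Upow_in_smooth_A by blast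
  then have "has_limits_pm (\<lambda>k. d (Upow 1) (k + - 1 + (n + 1)) (k + - 1))"
    by (rule has_limits_pm_shift)
  moreover have "d (Upow 1) (k + - 1 + (n + 1)) (k + - 1) = beta k - beta (k - 1)" for k
    using shift_coeff_eq_beta_diff[of "k - 1"] by (simp add: shift_coeff_def algebra_simps)
  ultimately show ?thesis unfolding convergent_increments_def by simp
qed

end

theorem mainTheorem9:
  fixes n :: int and d :: "mat \<Rightarrow> mat"
  assumes "is_derivation d" and "n_covariant n d"
  shows "\<exists>\<beta>. convergent_increments \<beta>
     \<and> (\<forall>a\<in>smooth_A. d a = commutator (mmult (Upow n) (diagop \<beta>)) a)
     \<and> (n \<noteq> 0 \<longrightarrow> (\<forall>\<beta>'. convergent_increments \<beta>'
            \<and> (\<forall>a\<in>smooth_A. d a = commutator (mmult (Upow n) (diagop \<beta>')) a) \<longrightarrow> \<beta>' = \<beta>))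
     \<and> (n = 0 \<longrightarrow> (\<forall>\<beta>'. convergent_increments \<beta>'
            \<and> (\<forall>a\<in>smooth_A. d a = commutator (mmult (Upow n) (diagop \<beta>')) a)
            \<longrightarrow> (\<exists>c. \<forall>k. \<beta>' k = \<beta> k + c)))"
proof -
  interpret covariant_derivation d n using assms by unfold_locales
  have implements: "\<forall>a\<in>smooth_A. d a = commutator (mmult (Upow n) (diagop beta)) a"
    using d_eq_commutator by blast
  have "n \<noteq> 0 \<Longrightarrow> \<beta>' = beta" and "n = 0 \<Longrightarrow> \<exists>c. \<forall>k. \<beta>' k = beta k + c"
    if "\<forall>a\<in>smooth_A. d a = commutator (mmult (Upow n) (diagop \<beta>')) a" for \<beta>'
    using commutator_wshift_determines_coeff[of n \<beta>' beta] that implements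
    by (simp_all add: mmult_Upow_diagop)
  then show ?thesis using convergent_increments_beta implements by blast
qed

end
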